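(* Let $p$ be a prime number which has Property C, and let $A$ be a sequence of length $4p-4$ over $(\mathbb{Z}/p\mathbb{Z})^2$ that does not contain any zero-sum subsequence of length $p$. Then either $A$ contains an element with multiplicity $p-1$, or all elements of $A$ have multiplicity at most $\frac{p}{2}$.
   Context: Sequences are finite, unordered, and may contain repeated elements; $a^{k}$ denotes $a$ repeated $k$ times, and the multiplicity of an element is the number of times it occurs. A zero-sum subsequence is a subsequence (selection of terms at distinct positions) whose terms sum to $0$. A prime $p$ has Property C if every sequence of length $3p-3$ in $(\mathbb{Z}/p\mathbb{Z})^2$ that does not contain a zero-sum subsequence of length $\le p$ is of the form $a^{p-1}b^{p-1}c^{p-1}$ for some elements $a,b,c$. *)

theory Defs
  imports Main "HOL-Library.Multiset" "HOL-Computational_Algebra.Primes"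
begin

text \<open>Elements of (Z/pZ)^2 are represented by pairs of naturals with both
  components in {0..<p}; sequences are multisets of such pairs.\<close>

definition in_Zp2 :: "nat \<Rightarrow> nat \<times> nat \<Rightarrow> bool" where
  "in_Zp2 p x \<longleftrightarrow> fst x < p \<and> snd x < p"

definition seq_over_Zp2 :: "nat \<Rightarrow> (nat \<times> nat) multiset \<Rightarrow> bool" where
  "seq_over_Zp2 p A \<longleftrightarrow> (\<forall>x \<in># A. in_Zp2 p x)"

definition zero_sum :: "nat \<Rightarrow> (nat \<times> nat) multiset \<Rightarrow> bool" where
  "zero_sum p T \<longleftrightarrow> sum_mset (image_mset fst T) mod p = 0 \<and> sum_mset (image_mset snd T) mod p = 0"

definition property_C :: "nat \<Rightarrow> bool" where
  "property_C p \<longleftrightarrow>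
     (\<forall>S. seq_over_Zp2 p S \<and> size S = 3 * p - 3 \<and>
          \<not> (\<exists>T. T \<subseteq># S \<and> T \<noteq> {#} \<and> size T \<le> p \<and> zero_sum p T)
        \<longrightarrow> (\<exists>a b c. S = replicate_mset (p - 1) a + replicate_mset (p - 1) b + replicate_mset (p - 1) c))"

end

(* If some x had multiplicity k with p/2 < k < p - 1 (k >= p would give the zero sum x^p),
   translate A by -x; this preserves the absence of zero-sum subsequences of length p, so
   x = 0. A zero-sum subsequence of the nonzero terms with length between p - k and p could
   be padded with zeros to length p, so none exists. But starting from the empty sequence,
   Property C applied to 3p - 3 of the unused nonzero terms always supplies a nonempty
   zero-sum block of length at most p to append, and since 2(p - k) < p the length climbs
   into [p - k, p] before exceeding p. *)

theory Submission
  imports Defs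
begin

lemma mod_add_minus_cancel: "(a::nat) < p \<Longrightarrow> (b + (p - a) mod p + a) mod p = b mod p"
proof -
  assume "a < p"
  have "(b + (p - a) mod p + a) mod p = (b + (p - a) + a) mod p"
    by (metis mod_add_left_eq mod_add_right_eq)
  also have "b + (p - a) + a = b + p" using \<open>a < p\<close> by simp
  finally show ?thesis by simp
qed

lemma sum_mset_add_const_mod:
  fixes f :: "'a \<Rightarrow> nat"
  shows "(\<Sum>z\<in>#T. (f z + d) mod p) mod p = ((\<Sum>z\<in>#T. f z) + size T * d) mod p"
proof (induction T)
  case (add x T)
  have "(\<Sum>z\<in>#add_mset x T. (f z + d) mod p) mod p
      = (f x + d + (\<Sum>z\<in>#T. (f z + d) mod p) mod p) mod p"
    by (simp add: mod_simps)
  also have "\<dots> = (f x + d + ((\<Sum>z\<in>#T. f z) + size T * d) mod p) mod p"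
    by (simp only: add.IH)
  also have "\<dots> = (f x + d + ((\<Sum>z\<in>#T. f z) + size T * d)) mod p"
    by (rule mod_add_right_eq)
  also have "\<dots> = ((\<Sum>z\<in>#add_mset x T. f z) + size (add_mset x T) * d) mod p"
    by (simp add: algebra_simps)
  finally show ?case .
qed simp

lemma exists_subset_mset_size: "n \<le> size M \<Longrightarrow> \<exists>N. N \<subseteq># M \<and> size N = n"
proof -
  assume "n \<le> size M"
  obtain xs where M: "M = mset xs" by (metis ex_mset)
  have "mset (take n xs) \<subseteq># mset xs"
    by (metis append_take_drop_id mset_append mset_subset_eq_add_left)
  then show ?thesis using M \<open>n \<le> size M\<close> by (intro exI[of _ "mset (take n xs)"]) simp
qed

lemma count_le_count_image_mset: "count M x \<le> count (image_mset f M) (f x)"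
  using image_mset_subseteq_mono[of "replicate_mset (count M x) x" M f]
  by (simp add: count_le_replicate_mset_subset_eq[symmetric])

definition translate :: "nat \<Rightarrow> nat \<times> nat \<Rightarrow> nat \<times> nat \<Rightarrow> nat \<times> nat" where
  "translate p c x = ((fst x + fst c) mod p, (snd x + snd c) mod p)"

definition neg_Zp2 :: "nat \<Rightarrow> nat \<times> nat \<Rightarrow> nat \<times> nat" where
  "neg_Zp2 p c = ((p - fst c) mod p, (p - snd c) mod p)"

lemma in_Zp2_translate: "0 < p \<Longrightarrow> in_Zp2 p (translate p c x)"
  unfolding translate_def in_Zp2_def by simp

lemma translate_translate_neg:
  "in_Zp2 p c \<Longrightarrow> in_Zp2 p x \<Longrightarrow> translate p c (translate p (neg_Zp2 p c) x) = x"
  unfolding translate_def neg_Zp2_def in_Zp2_def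
  by (simp add: mod_add_left_eq mod_add_minus_cancel)

lemma translate_neg_self: "in_Zp2 p c \<Longrightarrow> translate p (neg_Zp2 p c) c = (0, 0)"
  using mod_add_minus_cancel[of _ p 0]
  unfolding translate_def neg_Zp2_def in_Zp2_def by (simp add: add.commute)

lemma zero_sum_translate:
  assumes "p dvd size T"
  shows "zero_sum p (image_mset (translate p c) T) \<longleftrightarrow> zero_sum p T"
proof -
  have "((\<Sum>z\<in>#T. f z) + size T * d) mod p = (\<Sum>z\<in>#T. f z) mod p" for f :: "_ \<Rightarrow> nat" and d
    using assms by (simp add: mod_add_right_eq[symmetric])
  then show ?thesis
    unfolding zero_sum_def translate_def image_mset.compositionality comp_def
    by (simp add: sum_mset_add_const_mod)
qed

lemma zero_sum_subseq_translate:
  assumes "T \<subseteq># M" "size T = p" "zero_sum p T"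
  shows "\<exists>T'. T' \<subseteq># image_mset (translate p c) M \<and> size T' = p \<and> zero_sum p T'"
  using assms zero_sum_translate[of p T c] image_mset_subseteq_mono
  by (intro exI[of _ "image_mset (translate p c) T"]) auto

lemma zero_sum_union: "zero_sum p U \<Longrightarrow> zero_sum p V \<Longrightarrow> zero_sum p (U + V)"
  unfolding zero_sum_def by (simp add: mod_add_eq[symmetric])

lemma zero_sum_add_zeros: "zero_sum p (W + replicate_mset n (0, 0)) \<longleftrightarrow> zero_sum p W"
  unfolding zero_sum_def by simp

lemma zero_sum_replicate: "zero_sum p (replicate_mset p x)"
  unfolding zero_sum_def by simp

lemma count_less_if_no_zero_sum_subseq:
  assumes "\<not> (\<exists>T. T \<subseteq># A \<and> size T = p \<and> zero_sum p T)"
  shows "count A x < p"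
  using assms zero_sum_replicate[of p x] count_le_replicate_mset_subset_eq[of p A x]
  by (metis not_le size_replicate_mset)

lemma zero_sum_subseq_if_property_C:
  assumes "property_C p" "seq_over_Zp2 p T" "size T = 3 * p - 3" "\<forall>y. count T y < p - 1"
  shows "\<exists>V. V \<subseteq># T \<and> V \<noteq> {#} \<and> size V \<le> p \<and> zero_sum p V"
proof (rule ccontr)
  assume "\<not> ?thesis"
  then obtain a b c where
    "T = replicate_mset (p - 1) a + replicate_mset (p - 1) b + replicate_mset (p - 1) c"
    using assms(1-3) unfolding property_C_def by blast
  then have "p - 1 \<le> count T a" by simp
  with assms(4) show False by (meson not_le)
qed

lemma zero_sum_subseq_of_size_between:
  assumes C: "property_C p" and B: "seq_over_Zp2 p B" and cnt: "\<forall>y. count B y < p - 1"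
    and size_B: "3 * p - 3 + m \<le> size B + 1" and m_small: "2 * m \<le> p + 2"
  shows "\<exists>W. W \<subseteq># B \<and> zero_sum p W \<and> m \<le> size W \<and> size W \<le> p"
proof (rule ccontr)
  assume none: "\<not> ?thesis"
  have "\<exists>U. U \<subseteq># B \<and> zero_sum p U \<and> n \<le> size U \<and> size U < m" for n
  proof (induction n)
    case 0
    have "zero_sum p {#}" by (simp add: zero_sum_def)
    moreover from this none have "0 < m" by force
    ultimately show ?case by (auto intro!: exI[of _ "{#}"])
  next
    case (Suc n)
    then obtain U where U: "U \<subseteq># B" "zero_sum p U" "n \<le> size U" "size U < m" by blast
    have "3 * p - 3 \<le> size (B - U)"
      using size_Diff_submset[OF U(1)] U(4) size_B by simp
    then obtain T where T: "T \<subseteq># B - U" "size T = 3 * p - 3"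
      using exists_subset_mset_size by blast
    have TB: "T \<subseteq># B" using T(1) by (meson diff_subset_eq_self subset_mset.order_trans)
    have "seq_over_Zp2 p T"
      using B TB unfolding seq_over_Zp2_def by (meson mset_subset_eqD)
    moreover have "\<forall>y. count T y < p - 1"
      using cnt TB by (meson le_less_trans mset_subset_eq_count)
    ultimately obtain V where V: "V \<subseteq># T" "V \<noteq> {#}" "size V \<le> p" "zero_sum p V"
      using zero_sum_subseq_if_property_C[OF C] T(2) by blast
    with none TB have "size V < m" by (meson not_le subset_mset.order_trans)
    have UV: "U + V \<subseteq># B"
      using subset_mset.add_left_mono[OF subset_mset.order_trans[OF V(1) T(1)], of U] U(1)
      by simp
    have zs_UV: "zero_sum p (U + V)" using U(2) V(4) by (rule zero_sum_union)
    have "size (U + V) \<le> p" using U(4) \<open>size V < m\<close> m_small by simp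
    with none UV zs_UV have "size (U + V) < m" by (meson not_le)
    moreover have "Suc n \<le> size (U + V)" using U(3) V(2) by (simp add: Suc_le_eq nonempty_has_size)
    ultimately show ?case using UV zs_UV by blast
  qed
  from this[of m] show False by auto
qed

lemma count_zero_le_half:
  assumes C: "property_C p" and A: "seq_over_Zp2 p A" and size_A: "size A = 4 * p - 4"
    and no_zs: "\<not> (\<exists>T. T \<subseteq># A \<and> size T = p \<and> zero_sum p T)"
    and cnt: "\<forall>y. count A y < p - 1"
  shows "2 * count A (0, 0) \<le> p"
proof (rule ccontr)
  define k where "k = count A (0, 0)"
  define B where "B = {#x \<in># A. x \<noteq> (0, 0)#}"
  assume "\<not> 2 * count A (0, 0) \<le> p"
  then have k_large: "p < 2 * k" by (simp add: k_def)
  have k_small: "k < p - 1" using cnt by (simp add: k_def)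
  have A_eq: "A = B + replicate_mset k (0, 0)"
    using multiset_partition[of A "\<lambda>x. x \<noteq> (0, 0)"]
    by (simp add: B_def k_def filter_eq_replicate_mset)
  then have size_B: "size B = 4 * p - 4 - k" using size_A by simp
  have "B \<subseteq># A" by (simp add: A_eq)
  then have "seq_over_Zp2 p B" "\<forall>y. count B y < p - 1"
    using A cnt unfolding seq_over_Zp2_def
    by (auto dest: mset_subset_eqD) (meson le_less_trans mset_subset_eq_count)
  then obtain W where W: "W \<subseteq># B" "zero_sum p W" "p - k \<le> size W" "size W \<le> p"
    using zero_sum_subseq_of_size_between[OF C, of B "p - k"] size_B k_large k_small by force
  have "W + replicate_mset (p - size W) (0, 0) \<subseteq># A"
    unfolding A_eq using W(1,3)
    by (intro subset_mset.add_mono) (auto simp: replicate_mset_msubseteq_iff)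
  moreover have "zero_sum p (W + replicate_mset (p - size W) (0, 0))"
    using W(2) by (simp add: zero_sum_add_zeros)
  moreover have "size (W + replicate_mset (p - size W) (0, 0)) = p" using W(4) by simp
  ultimately show False using no_zs by blast
qed

lemma count_le_half:
  assumes "0 < p" and C: "property_C p" and A: "seq_over_Zp2 p A" and size_A: "size A = 4 * p - 4"
    and no_zs: "\<not> (\<exists>T. T \<subseteq># A \<and> size T = p \<and> zero_sum p T)"
    and cnt: "\<forall>y. count A y < p - 1" and x: "x \<in># A"
  shows "2 * count A x \<le> p"
proof -
  have x_Zp2: "in_Zp2 p x" using A x by (simp add: seq_over_Zp2_def)
  define A' where "A' = image_mset (translate p (neg_Zp2 p x)) A"
  have "image_mset (translate p x) A' = image_mset (\<lambda>y. y) A"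
    unfolding A'_def image_mset.compositionality comp_def using A x_Zp2
    by (intro image_mset_cong) (simp add: seq_over_Zp2_def translate_translate_neg)
  then have A_eq: "A = image_mset (translate p x) A'" by simp
  have "seq_over_Zp2 p A'"
    using \<open>0 < p\<close> in_Zp2_translate unfolding A'_def seq_over_Zp2_def by auto
  moreover have "size A' = 4 * p - 4" using size_A by (simp add: A'_def)
  moreover have "\<not> (\<exists>T. T \<subseteq># A' \<and> size T = p \<and> zero_sum p T)"
    using no_zs zero_sum_subseq_translate[of _ A' p x] A_eq by metis
  moreover have "\<forall>y. count A' y < p - 1"
    using cnt count_le_count_image_mset[of A' _ "translate p x"] A_eq by (metis le_less_trans)
  ultimately have "2 * count A' (0, 0) \<le> p" using count_zero_le_half[OF C] by blast
  moreover have "count A x \<le> count A' (0, 0)"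
    using count_le_count_image_mset[of A x "translate p (neg_Zp2 p x)"]
    unfolding A'_def translate_neg_self[OF x_Zp2] .
  ultimately show ?thesis by linarith
qed

theorem lemma2p1:
  fixes p :: nat and A :: "(nat \<times> nat) multiset"
  assumes "prime p"
    and "property_C p"
    and "seq_over_Zp2 p A"
    and "size A = 4 * p - 4"
    and "\<not> (\<exists>T. T \<subseteq># A \<and> size T = p \<and> zero_sum p T)"
  shows "(\<exists>x \<in># A. count A x = p - 1) \<or> (\<forall>x \<in># A. 2 * count A x \<le> p)"
proof (cases "\<exists>x \<in># A. count A x = p - 1")
  case False
  have "count A y < p - 1" for y
  proof -
    have "count A y < p" using assms(5) by (rule count_less_if_no_zero_sum_subseq)
    moreover have "count A y \<noteq> p - 1"
      using False prime_gt_1_nat[OF assms(1)] by (cases "y \<in># A") (auto simp: not_in_iff)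
    ultimately show ?thesis by simp
  qed
  then have "\<forall>x \<in># A. 2 * count A x \<le> p"
    using count_le_half[OF prime_gt_0_nat[OF assms(1)] assms(2-5)] by blast
  then show ?thesis by blast
qed simp

end
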